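(* Let $\mathfrak M$ be a finite dimensional right $\mathbb H$-linear space of $\mathbb H^r$-valued functions, each of which is given in a neighborhood of the origin by a convergent series $f=\sum_{n\ge0}P_nf_n$ with $f_n\in\mathbb H^r$ (as is the case for functions hyperholomorphic of axial type near the origin). Then $\mathfrak M$ is invariant under $R_0:\sum_nP_nf_n\mapsto\sum_nP_nf_{n+1}$ if and only if there exist $N\in\mathbb N$ and matrices $(\mathsf C,\mathsf A)\in\mathbb H^{r\times N}\times\mathbb H^{N\times N}$ such that $\mathfrak M=\{\sum_{n\ge0}P_n\mathsf C\mathsf A^n\xi:\ \xi\in\mathbb H^N\}$. Moreover, for any such pair, $N\ge\dim\mathfrak M$, with equality if and only if the pair is observable, i.e. $\bigcap_{n\ge0}\ker\mathsf C\mathsf A^n=\{0\}$.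
   Context: For $m\ge0$, $T^m_j=\frac{2(m-j+1)}{(m+1)(m+2)}$, $c_m=\sum_{j=0}^m(-1)^jT^m_j$, $P_m(x)=\frac1{c_m}\sum_{j=0}^mT^m_jx^{m-j}\overline{x}^{\,j}$ for quaternions $x$, $\overline x$ the quaternionic conjugate. These polynomials are Fueter hyperholomorphic and a function expanded as $\sum_nP_nf_n$ determines its coefficients uniquely. *)

theory Defs
  imports "HOL-Analysis.Analysis"
begin

datatype quat = Quat (Re: real) (Im1: real) (Im2: real) (Im3: real)

lemma quat_eq_iff: "x = y \<longleftrightarrow> Re x = Re y \<and> Im1 x = Im1 y \<and> Im2 x = Im2 y \<and> Im3 x = Im3 y"
  by (cases x; cases y) auto

instantiation quat :: ring_1
begin
definition "0 = Quat 0 0 0 0"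
definition "1 = Quat 1 0 0 0"
definition "x + y = Quat (Re x + Re y) (Im1 x + Im1 y) (Im2 x + Im2 y) (Im3 x + Im3 y)"
definition "x - y = Quat (Re x - Re y) (Im1 x - Im1 y) (Im2 x - Im2 y) (Im3 x - Im3 y)"
definition "- x = Quat (- Re x) (- Im1 x) (- Im2 x) (- Im3 x)"
definition "x * y = Quat
   (Re x * Re y - Im1 x * Im1 y - Im2 x * Im2 y - Im3 x * Im3 y)
   (Re x * Im1 y + Im1 x * Re y + Im2 x * Im3 y - Im3 x * Im2 y)
   (Re x * Im2 y - Im1 x * Im3 y + Im2 x * Re y + Im3 x * Im1 y)
   (Re x * Im3 y + Im1 x * Im2 y - Im2 x * Im1 y + Im3 x * Re y)"
instance
  by standard
    (auto simp: quat_eq_iff zero_quat_def one_quat_def plus_quat_def minus_quat_def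
      uminus_quat_def times_quat_def algebra_simps)
end

definition quat_coords :: "quat \<Rightarrow> real \<times> real \<times> real \<times> real" where
  "quat_coords q = (Re q, Im1 q, Im2 q, Im3 q)"

lemma inj_quat_coords: "inj quat_coords"
  by (auto simp: inj_def quat_coords_def quat_eq_iff)

lemma surj_quat_coords: "surj quat_coords"
  by (auto simp: quat_coords_def image_def intro!: exI[of _ "Quat _ _ _ _"])

instantiation quat :: topological_space
begin
definition open_quat_def: "open (S :: quat set) \<longleftrightarrow> open (quat_coords ` S)"
instance
proof
  show "open (UNIV :: quat set)" using surj_quat_coords by (simp add: open_quat_def)
next
  fix S T :: "quat set" assume "open S" "open T"
  then show "open (S \<inter> T)"
    using inj_quat_coords by (simp add: open_quat_def image_Int open_Int)
next
  fix K :: "quat set set" assume "\<forall>S\<in>K. open S"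
  then show "open (\<Union>K)" by (auto simp: open_quat_def image_Union intro!: open_Union)
qed
end

definition qcnj :: "quat \<Rightarrow> quat" where
  "qcnj x = Quat (Re x) (- Im1 x) (- Im2 x) (- Im3 x)"

definition qreal :: "real \<Rightarrow> quat" where
  "qreal t = Quat t 0 0 0"

definition T :: "nat \<Rightarrow> nat \<Rightarrow> real" where
  "T m j = 2 * (real m - real j + 1) / ((real m + 1) * (real m + 2))"

definition cc :: "nat \<Rightarrow> real" where
  "cc m = (\<Sum>j\<le>m. (-1) ^ j * T m j)"

definition P :: "nat \<Rightarrow> quat \<Rightarrow> quat" where
  "P m x = qreal (1 / cc m) * (\<Sum>j\<le>m. qreal (T m j) * x ^ (m - j) * qcnj x ^ j)"

text \<open>Elements of \<open>\<bbbH>\<^sup>k\<close> are functions \<open>nat \<Rightarrow> quat\<close> vanishing from index \<open>k\<close> on;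
  a \<open>m \<times> k\<close> matrix is a function \<open>nat \<Rightarrow> nat \<Rightarrow> quat\<close> of which only the entries
  with row index \<open>< m\<close> and column index \<open>< k\<close> are used.\<close>

definition qvecs :: "nat \<Rightarrow> (nat \<Rightarrow> quat) set" where
  "qvecs k = {v. \<forall>i\<ge>k. v i = 0}"

definition mv :: "nat \<Rightarrow> nat \<Rightarrow> (nat \<Rightarrow> nat \<Rightarrow> quat) \<Rightarrow> (nat \<Rightarrow> quat) \<Rightarrow> (nat \<Rightarrow> quat)" where
  "mv m k M v = (\<lambda>i. if i < m then (\<Sum>j<k. M i j * v j) else 0)"

definition CApow :: "nat \<Rightarrow> nat \<Rightarrow> (nat \<Rightarrow> nat \<Rightarrow> quat) \<Rightarrow> (nat \<Rightarrow> nat \<Rightarrow> quat)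
    \<Rightarrow> nat \<Rightarrow> (nat \<Rightarrow> quat) \<Rightarrow> (nat \<Rightarrow> quat)" where
  "CApow r N C A n \<xi> = mv r N C ((mv N N A ^^ n) \<xi>)"

definition observable :: "nat \<Rightarrow> nat \<Rightarrow> (nat \<Rightarrow> nat \<Rightarrow> quat) \<Rightarrow> (nat \<Rightarrow> nat \<Rightarrow> quat) \<Rightarrow> bool" where
  "observable r N C A \<longleftrightarrow> (\<forall>\<xi>\<in>qvecs N. (\<forall>n. CApow r N C A n \<xi> = (\<lambda>i. 0)) \<longrightarrow> \<xi> = (\<lambda>i. 0))"

text \<open>\<open>\<bbbH>\<^sup>r\<close>-valued functions are modelled as \<open>quat \<Rightarrow> nat \<Rightarrow> quat\<close>.
  Everything is considered near the origin, i.e. at the level of germs at \<open>0\<close>.\<close>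

definition series_near0 :: "(quat \<Rightarrow> nat \<Rightarrow> quat) \<Rightarrow> (nat \<Rightarrow> nat \<Rightarrow> quat) \<Rightarrow> bool" where
  "series_near0 f a \<longleftrightarrow> (\<forall>\<^sub>F x in nhds 0. \<forall>i. (\<lambda>n. P n x * a n i) sums f x i)"

definition has_expansion :: "nat \<Rightarrow> (quat \<Rightarrow> nat \<Rightarrow> quat) \<Rightarrow> (nat \<Rightarrow> nat \<Rightarrow> quat) \<Rightarrow> bool" where
  "has_expansion r f a \<longleftrightarrow> (\<forall>n. a n \<in> qvecs r) \<and> series_near0 f a"

definition germ_eq :: "(quat \<Rightarrow> nat \<Rightarrow> quat) \<Rightarrow> (quat \<Rightarrow> nat \<Rightarrow> quat) \<Rightarrow> bool" where
  "germ_eq f g \<longleftrightarrow> (\<forall>\<^sub>F x in nhds 0. f x = g x)"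

definition right_lin_space :: "(quat \<Rightarrow> nat \<Rightarrow> quat) set \<Rightarrow> bool" where
  "right_lin_space M \<longleftrightarrow> (\<lambda>x i. 0) \<in> M \<and>
     (\<forall>f\<in>M. \<forall>g\<in>M. (\<lambda>x i. f x i + g x i) \<in> M) \<and>
     (\<forall>f\<in>M. \<forall>q. (\<lambda>x i. f x i * q) \<in> M)"

definition rcomb :: "nat \<Rightarrow> (nat \<Rightarrow> quat \<Rightarrow> nat \<Rightarrow> quat) \<Rightarrow> (nat \<Rightarrow> quat) \<Rightarrow> (quat \<Rightarrow> nat \<Rightarrow> quat)" where
  "rcomb k b c = (\<lambda>x i. \<Sum>j<k. b j x i * c j)"

definition spans :: "(quat \<Rightarrow> nat \<Rightarrow> quat) set \<Rightarrow> nat \<Rightarrow> (nat \<Rightarrow> quat \<Rightarrow> nat \<Rightarrow> quat) \<Rightarrow> bool" where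
  "spans M k b \<longleftrightarrow> (\<forall>j<k. b j \<in> M) \<and> (\<forall>f\<in>M. \<exists>c. germ_eq f (rcomb k b c))"

definition is_basis :: "(quat \<Rightarrow> nat \<Rightarrow> quat) set \<Rightarrow> nat \<Rightarrow> (nat \<Rightarrow> quat \<Rightarrow> nat \<Rightarrow> quat) \<Rightarrow> bool" where
  "is_basis M k b \<longleftrightarrow> spans M k b \<and>
     (\<forall>c. germ_eq (rcomb k b c) (\<lambda>x i. 0) \<longrightarrow> (\<forall>j<k. c j = 0))"

definition fin_dim :: "(quat \<Rightarrow> nat \<Rightarrow> quat) set \<Rightarrow> bool" where
  "fin_dim M \<longleftrightarrow> (\<exists>k b. spans M k b)"

definition qdim :: "(quat \<Rightarrow> nat \<Rightarrow> quat) set \<Rightarrow> nat" where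
  "qdim M = (LEAST k. \<exists>b. is_basis M k b)"

definition R0_invariant :: "nat \<Rightarrow> (quat \<Rightarrow> nat \<Rightarrow> quat) set \<Rightarrow> bool" where
  "R0_invariant r M \<longleftrightarrow>
     (\<forall>f\<in>M. \<forall>a. has_expansion r f a \<longrightarrow> (\<exists>g\<in>M. has_expansion r g (\<lambda>n. a (Suc n))))"

definition realizes :: "nat \<Rightarrow> (quat \<Rightarrow> nat \<Rightarrow> quat) set \<Rightarrow> nat
    \<Rightarrow> (nat \<Rightarrow> nat \<Rightarrow> quat) \<Rightarrow> (nat \<Rightarrow> nat \<Rightarrow> quat) \<Rightarrow> bool" where
  "realizes r M N C A \<longleftrightarrow>
     (\<forall>f\<in>M. \<exists>\<xi>\<in>qvecs N. series_near0 f (\<lambda>n. CApow r N C A n \<xi>)) \<and>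
     (\<forall>\<xi>\<in>qvecs N. \<exists>f\<in>M. series_near0 f (\<lambda>n. CApow r N C A n \<xi>))"

end

theory Submission
  imports Defs "HOL-Complex_Analysis.Cauchy_Integral_Formula"
begin

text \<open>
  On the real axis \<open>P\<^sub>n(t) = t\<^sup>n / c\<^sub>n\<close> with \<open>c\<^sub>n \<noteq> 0\<close> (the \<open>T\<^sup>n\<^sub>j\<close> sum to 1), so there
  every component of \<open>\<Sum>\<^sub>n P\<^sub>n f\<^sub>n\<close> is a real power series in \<open>t\<close>: the coefficients are
  determined by the germ, and \<open>R\<^sub>0\<close> is well defined on \<open>\<MM>\<close>.
  If \<open>\<MM>\<close> is \<open>R\<^sub>0\<close>-invariant, pick a spanning family \<open>b\<^sub>1, \<dots>, b\<^sub>k\<close>, write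
  \<open>R\<^sub>0 b\<^sub>j = \<Sum>\<^sub>l b\<^sub>l A\<^sub>l\<^sub>j\<close> and let \<open>C\<close> collect the constant coefficients of the \<open>b\<^sub>j\<close>;
  then the \<open>n\<close>-th coefficient of \<open>\<Sum>\<^sub>j b\<^sub>j \<xi>\<^sub>j\<close> is \<open>C A\<^sup>n \<xi>\<close>. Conversely a realization is
  invariant, \<open>R\<^sub>0\<close> acting as \<open>\<xi> \<mapsto> A \<xi>\<close>.
  For a realization \<open>(C, A)\<close> the germs realizing the unit vectors span \<open>\<MM>\<close>, and the
  combination with coefficients \<open>\<xi>\<close> vanishes iff \<open>\<xi> \<in> \<Inter>\<^sub>n ker C A\<^sup>n\<close>. Over the skew field
  \<open>\<bbbH>\<close> Gaussian elimination still shows that a spanning family thins out to a basis and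
  is at least as long as any independent family, so \<open>dim \<MM> \<le> N\<close>, with equality iff that
  kernel is trivial.
\<close>

lemma quat_sel_simps [simp]:
  "quat.Re 0 = 0" "Im1 0 = 0" "Im2 0 = 0" "Im3 0 = 0"
  "quat.Re 1 = 1" "Im1 1 = 0" "Im2 1 = 0" "Im3 1 = 0"
  "quat.Re (x + y) = quat.Re x + quat.Re y" "Im1 (x + y) = Im1 x + Im1 y"
  "Im2 (x + y) = Im2 x + Im2 y" "Im3 (x + y) = Im3 x + Im3 y"
  "quat.Re (x - y) = quat.Re x - quat.Re y" "Im1 (x - y) = Im1 x - Im1 y"
  "Im2 (x - y) = Im2 x - Im2 y" "Im3 (x - y) = Im3 x - Im3 y"
  "quat.Re (- x) = - quat.Re x" "Im1 (- x) = - Im1 x" "Im2 (- x) = - Im2 x" "Im3 (- x) = - Im3 x"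
  "quat.Re (x * y) = quat.Re x * quat.Re y - Im1 x * Im1 y - Im2 x * Im2 y - Im3 x * Im3 y"
  "Im1 (x * y) = quat.Re x * Im1 y + Im1 x * quat.Re y + Im2 x * Im3 y - Im3 x * Im2 y"
  "Im2 (x * y) = quat.Re x * Im2 y - Im1 x * Im3 y + Im2 x * quat.Re y + Im3 x * Im1 y"
  "Im3 (x * y) = quat.Re x * Im3 y + Im1 x * Im2 y - Im2 x * Im1 y + Im3 x * quat.Re y"
  by (simp_all add: zero_quat_def one_quat_def plus_quat_def minus_quat_def uminus_quat_def
      times_quat_def)

definition quat_normsq :: "quat \<Rightarrow> real" where
  "quat_normsq x = (quat.Re x)\<^sup>2 + (Im1 x)\<^sup>2 + (Im2 x)\<^sup>2 + (Im3 x)\<^sup>2"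

lemma quat_normsq_eq_0_iff: "quat_normsq x = 0 \<longleftrightarrow> x = 0"
  by (simp add: quat_normsq_def quat_eq_iff add_nonneg_eq_0_iff)

instantiation quat :: division_ring
begin

definition inverse_quat_def: "inverse x =
  Quat (quat.Re x / quat_normsq x) (- Im1 x / quat_normsq x) (- Im2 x / quat_normsq x)
    (- Im3 x / quat_normsq x)"

definition "x div y = x * inverse y" for x y :: quat

instance
proof
  fix x :: quat assume "x \<noteq> 0"
  then have "quat_normsq x \<noteq> 0" by (simp add: quat_normsq_eq_0_iff)
  then show "inverse x * x = 1" "x * inverse x = 1"
    by (simp_all add: quat_eq_iff inverse_quat_def field_simps)
      (simp_all add: quat_normsq_def power2_eq_square algebra_simps)
qed (simp_all add: divide_quat_def inverse_quat_def quat_eq_iff)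

end

lemma tendsto_quat_coords:
  "(f \<longlongrightarrow> l) F \<longleftrightarrow> ((\<lambda>x. quat_coords (f x)) \<longlongrightarrow> quat_coords l) F"
proof
  assume lim: "(f \<longlongrightarrow> l) F"
  show "((\<lambda>x. quat_coords (f x)) \<longlongrightarrow> quat_coords l) F"
  proof (rule topological_tendstoI)
    fix S assume S: "open S" "quat_coords l \<in> S"
    have "open (quat_coords -` S)"
      using S surj_quat_coords by (simp add: open_quat_def surj_image_vimage_eq)
    then show "eventually (\<lambda>x. quat_coords (f x) \<in> S) F"
      using lim S by (auto simp: tendsto_def)
  qed
next
  assume lim: "((\<lambda>x. quat_coords (f x)) \<longlongrightarrow> quat_coords l) F"
  show "(f \<longlongrightarrow> l) F"
  proof (rule topological_tendstoI)
    fix S assume "open S" "l \<in> S"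
    then have "eventually (\<lambda>x. quat_coords (f x) \<in> quat_coords ` S) F"
      using lim by (auto simp: tendsto_def open_quat_def)
    then show "eventually (\<lambda>x. f x \<in> S) F"
      using inj_quat_coords by (auto elim: eventually_mono simp: inj_image_mem_iff)
  qed
qed

lemma tendsto_Pair_iff:
  "((\<lambda>x. (f x, g x)) \<longlongrightarrow> (a, b)) F \<longleftrightarrow> (f \<longlongrightarrow> a) F \<and> (g \<longlongrightarrow> b) F"
  by (auto intro: tendsto_Pair dest: tendsto_fst tendsto_snd)

lemma tendsto_quat_iff:
  "(f \<longlongrightarrow> l) F \<longleftrightarrow>
     ((\<lambda>x. quat.Re (f x)) \<longlongrightarrow> quat.Re l) F \<and> ((\<lambda>x. Im1 (f x)) \<longlongrightarrow> Im1 l) F \<and>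
     ((\<lambda>x. Im2 (f x)) \<longlongrightarrow> Im2 l) F \<and> ((\<lambda>x. Im3 (f x)) \<longlongrightarrow> Im3 l) F"
  unfolding tendsto_quat_coords quat_coords_def tendsto_Pair_iff ..

lemma tendsto_quat_components:
  assumes "(f \<longlongrightarrow> l) F"
  shows "((\<lambda>x. quat.Re (f x)) \<longlongrightarrow> quat.Re l) F" "((\<lambda>x. Im1 (f x)) \<longlongrightarrow> Im1 l) F"
    "((\<lambda>x. Im2 (f x)) \<longlongrightarrow> Im2 l) F" "((\<lambda>x. Im3 (f x)) \<longlongrightarrow> Im3 l) F"
  using assms by (simp_all add: tendsto_quat_iff)

instance quat :: t2_space
proof
  fix x y :: quat assume "x \<noteq> y"
  then have "quat_coords x \<noteq> quat_coords y" using inj_quat_coords by (auto dest: injD)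
  then obtain U V where UV: "open U" "open V" "quat_coords x \<in> U" "quat_coords y \<in> V" "U \<inter> V = {}"
    by (metis hausdorff)
  have "open (quat_coords -` W)" if "open W" for W
    using that surj_quat_coords by (simp add: open_quat_def surj_image_vimage_eq)
  with UV show "\<exists>U V. open U \<and> open V \<and> x \<in> U \<and> y \<in> V \<and> U \<inter> V = {}"
    by (intro exI[of _ "quat_coords -` U"] exI[of _ "quat_coords -` V"]) auto
qed

instance quat :: topological_ab_group_add
proof
  fix a b :: quat
  show "LIM x (nhds a \<times>\<^sub>F nhds b). fst x + snd x :> nhds (a + b)"
    using tendsto_quat_components[OF filterlim_fst[of "nhds a" "nhds b"]]
      tendsto_quat_components[OF filterlim_snd[of "nhds b" "nhds a"]]
    by (simp add: tendsto_quat_iff tendsto_add)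
  show "(uminus \<longlongrightarrow> - a) (nhds a)"
    using tendsto_quat_components[OF filterlim_ident[of "nhds a"]]
    by (simp add: tendsto_quat_iff tendsto_minus)
qed

instance quat :: topological_semigroup_mult
proof
  fix a b :: quat
  show "LIM x (nhds a \<times>\<^sub>F nhds b). fst x * snd x :> nhds (a * b)"
    using tendsto_quat_components[OF filterlim_fst[of "nhds a" "nhds b"]]
      tendsto_quat_components[OF filterlim_snd[of "nhds b" "nhds a"]]
    by (simp add: tendsto_quat_iff tendsto_intros)
qed

lemma sums_mult_right:
  fixes f :: "nat \<Rightarrow> 'a::{topological_semigroup_mult, semiring_0}"
  shows "f sums s \<Longrightarrow> (\<lambda>n. f n * c) sums (s * c)"
  unfolding sums_def by (simp add: sum_distrib_right[symmetric] tendsto_mult_right)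

lemma quat_sum_sel:
  "quat.Re (sum g A) = (\<Sum>a\<in>A. quat.Re (g a))" "Im1 (sum g A) = (\<Sum>a\<in>A. Im1 (g a))"
  "Im2 (sum g A) = (\<Sum>a\<in>A. Im2 (g a))" "Im3 (sum g A) = (\<Sum>a\<in>A. Im3 (g a))"
  by (induct A rule: infinite_finite_induct) simp_all

lemma sums_quat_components:
  assumes "g sums s"
  shows "(\<lambda>n. quat.Re (g n)) sums quat.Re s" "(\<lambda>n. Im1 (g n)) sums Im1 s"
    "(\<lambda>n. Im2 (g n)) sums Im2 s" "(\<lambda>n. Im3 (g n)) sums Im3 s"
  using tendsto_quat_components[OF assms[unfolded sums_def]] by (simp_all add: sums_def quat_sum_sel)

section \<open>The polynomials \<open>P\<^sub>n\<close> on the real axis\<close>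

lemma qreal_sel [simp]:
  "quat.Re (qreal t) = t" "Im1 (qreal t) = 0" "Im2 (qreal t) = 0" "Im3 (qreal t) = 0"
  by (simp_all add: qreal_def)

lemma qreal_mult: "qreal a * qreal b = qreal (a * b)"
  by (simp add: quat_eq_iff)

lemma qreal_power: "qreal a ^ n = qreal (a ^ n)"
  by (induct n) (simp_all add: quat_eq_iff qreal_mult[symmetric])

lemma qcnj_qreal: "qcnj (qreal a) = qreal a"
  by (simp add: quat_eq_iff qcnj_def)

lemma qreal_sum: "(\<Sum>j\<in>A. qreal (g j)) = qreal (\<Sum>j\<in>A. g j)"
  by (simp add: quat_eq_iff quat_sum_sel)

lemma tendsto_qreal: "(qreal \<longlongrightarrow> 0) (nhds 0)"
  by (simp add: tendsto_quat_iff filterlim_ident)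

lemma eventually_nhds_qreal:
  "eventually Q (nhds (0::quat)) \<Longrightarrow> eventually (\<lambda>t. Q (qreal t)) (nhds 0)"
  using tendsto_qreal unfolding filterlim_iff by blast

lemma sum_T: "(\<Sum>j\<le>m. T m j) = 1"
proof -
  have gauss: "2 * (\<Sum>j\<le>m. real m - real j + 1) = (real m + 1) * (real m + 2)"
    using double_gauss_sum[of m, where 'a=real]
    by (simp add: atMost_atLeast0 sum_subtractf sum.distrib algebra_simps)
  have "(\<Sum>j\<le>m. T m j) = 2 * (\<Sum>j\<le>m. real m - real j + 1) / ((real m + 1) * (real m + 2))"
    unfolding T_def by (simp add: sum_divide_distrib sum_distrib_left)
  also have "\<dots> = 1"
    unfolding gauss by simp
  finally show ?thesis .
qed

lemma alternating_sum_bounds: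
  "0 < (\<Sum>j\<le>m. (-1) ^ j * (real m - real j + 1)) \<and> (\<Sum>j\<le>m. (-1) ^ j * (real m - real j + 1)) \<le> real m + 1"
proof (induct m)
  case (Suc m)
  have "(\<Sum>j\<le>Suc m. (-1) ^ j * (real (Suc m) - real j + 1))
      = real m + 2 - (\<Sum>j\<le>m. (-1) ^ j * (real m - real j + 1))"
    by (subst sum.atMost_Suc_shift) (simp add: sum_negf[symmetric])
  with Suc show ?case by simp
qed simp

lemma cc_nonzero: "cc m \<noteq> 0"
proof -
  have "cc m = 2 / ((real m + 1) * (real m + 2)) * (\<Sum>j\<le>m. (-1) ^ j * (real m - real j + 1))"
    unfolding cc_def T_def by (simp add: sum_distrib_left field_simps)
  then show ?thesis using alternating_sum_bounds[of m] by simp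
qed

lemma P_qreal: "P n (qreal t) = qreal (t ^ n / cc n)"
proof -
  have "qreal (T n j) * qreal t ^ (n - j) * qcnj (qreal t) ^ j = qreal (T n j * t ^ n)"
    if "j \<le> n" for j
    using that by (simp add: qcnj_qreal qreal_power qreal_mult mult.assoc power_add[symmetric])
  then show ?thesis
    by (simp add: P_def qreal_sum qreal_mult sum_distrib_right[symmetric] sum_T)
qed

lemma real_powser_zero_coeffs:
  fixes a :: "nat \<Rightarrow> real"
  assumes "eventually (\<lambda>t. (\<lambda>n. a n * t ^ n) sums 0) (nhds 0)"
  shows "a m = 0"
proof -
  obtain d where d: "d > 0" "\<And>t. dist t 0 < d \<Longrightarrow> (\<lambda>n. a n * t ^ n) sums 0"
    using assms unfolding eventually_nhds_metric by blast
  show ?thesis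
  proof (rule ccontr)
    assume am: "a m \<noteq> 0"
    have "a 0 = 0"
      using d(2)[of 0] d(1) by (simp add: sums_iff)
    with am have "m \<noteq> 0" by metis
    show False
    proof (rule powser_0_nonzero[where r=d and a=a and \<xi>=0 and f="\<lambda>_. 0" and m=m])
      fix s :: real assume "0 < s" and nonzero: "\<And>z::real. z \<in> cball 0 s - {0} \<Longrightarrow> (0::real) \<noteq> 0"
      then have "s \<in> cball 0 s - {0}" by simp
      from nonzero[OF this] show False by simp
    qed (use d am \<open>m \<noteq> 0\<close> in auto)
  qed
qed

lemma P_series_zero_coeffs:
  assumes "eventually (\<lambda>x. (\<lambda>n. P n x * d n) sums 0) (nhds 0)"
  shows "d n = 0"
proof -
  have on_reals: "eventually (\<lambda>t. (\<lambda>n. qreal (t ^ n / cc n) * d n) sums 0) (nhds 0)"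
    using eventually_nhds_qreal[OF assms] by (simp add: P_qreal)
  have component_zero: "\<phi> (d n) = 0"
    if "\<And>t. (\<lambda>n. qreal (t ^ n / cc n) * d n) sums 0 \<Longrightarrow> (\<lambda>n. \<phi> (d n) / cc n * t ^ n) sums 0"
    for \<phi> :: "quat \<Rightarrow> real"
  proof -
    have "eventually (\<lambda>t. (\<lambda>n. \<phi> (d n) / cc n * t ^ n) sums 0) (nhds 0)"
      using on_reals by (rule eventually_mono) (rule that)
    then have "\<phi> (d n) / cc n = 0" by (rule real_powser_zero_coeffs)
    then show ?thesis using cc_nonzero[of n] by simp
  qed
  have "quat.Re (d n) = 0" "Im1 (d n) = 0" "Im2 (d n) = 0" "Im3 (d n) = 0"
    by (rule component_zero, drule sums_quat_components, simp add: mult.commute)+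
  then show ?thesis by (simp add: quat_eq_iff)
qed

lemma germ_eq_sym: "germ_eq f g \<Longrightarrow> germ_eq g f"
  unfolding germ_eq_def by (auto elim: eventually_mono)

lemma series_near0_unique:
  assumes "series_near0 f a" "series_near0 f b"
  shows "a = b"
proof (intro ext)
  fix n i
  have "eventually (\<lambda>x. (\<lambda>n. P n x * (a n i - b n i)) sums 0) (nhds 0)"
    using assms unfolding series_near0_def
  proof eventually_elim
    case (elim x)
    then have "(\<lambda>n. P n x * a n i) sums f x i" "(\<lambda>n. P n x * b n i) sums f x i"
      by auto
    then have "(\<lambda>n. P n x * a n i - P n x * b n i) sums (f x i - f x i)"
      unfolding sums_def sum_subtractf by (rule tendsto_diff)
    then show ?case by (simp add: right_diff_distrib)
  qed
  then show "a n i = b n i"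
    using P_series_zero_coeffs by fastforce
qed

lemma series_near0_germ_eq:
  assumes "series_near0 f a" "germ_eq f g"
  shows "series_near0 g a"
  using assms unfolding series_near0_def germ_eq_def by eventually_elim auto

lemma germ_eq_if_series_near0:
  assumes "series_near0 f a" "series_near0 g a"
  shows "germ_eq f g"
  using assms unfolding series_near0_def germ_eq_def by eventually_elim (auto intro: sums_unique2)

lemma series_near0_zero: "series_near0 (\<lambda>x i. 0) (\<lambda>n i. 0)"
  by (simp add: series_near0_def)

lemma series_near0_rcomb:
  assumes "\<forall>j<k. series_near0 (b j) (\<alpha> j)"
  shows "series_near0 (rcomb k b c) (\<lambda>n i. \<Sum>j<k. \<alpha> j n i * c j)"
proof -
  have "eventually (\<lambda>x. \<forall>j\<in>{..<k}. \<forall>i. (\<lambda>n. P n x * \<alpha> j n i) sums b j x i) (nhds 0)"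
    using assms unfolding series_near0_def by (intro eventually_ball_finite) auto
  then show ?thesis
    unfolding series_near0_def
  proof eventually_elim
    case (elim x)
    show ?case
    proof
      fix i
      have "(\<lambda>n. \<Sum>j<k. P n x * \<alpha> j n i * c j) sums (\<Sum>j<k. b j x i * c j)"
        using elim by (intro sums_sum sums_mult_right) auto
      then show "(\<lambda>n. P n x * (\<Sum>j<k. \<alpha> j n i * c j)) sums rcomb k b c x i"
        by (simp add: rcomb_def sum_distrib_left mult.assoc)
    qed
  qed
qed

lemma rcomb_mem:
  assumes "right_lin_space M" "\<forall>j<k. b j \<in> M"
  shows "rcomb k b c \<in> M"
  using assms(2)
proof (induct k)
  case 0
  then show ?case using assms(1) by (simp add: rcomb_def right_lin_space_def)
next
  case (Suc k)
  have "rcomb (Suc k) b c = (\<lambda>x i. rcomb k b c x i + (\<lambda>x i. b k x i * c k) x i)"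
    by (simp add: rcomb_def)
  with Suc assms(1) show ?case by (simp add: right_lin_space_def)
qed

section \<open>Spanning families and dimension\<close>

lemma homogeneous_system_nontrivial_solution:
  fixes D :: "nat \<Rightarrow> 'b \<Rightarrow> 'a::division_ring"
  assumes "finite J" "k < card J"
  shows "\<exists>c. (\<exists>j\<in>J. c j \<noteq> 0) \<and> (\<forall>l<k. (\<Sum>j\<in>J. D l j * c j) = 0)"
  using assms
proof (induct k arbitrary: J D)
  case 0
  then obtain p where "p \<in> J" by fastforce
  then show ?case by (intro exI[of _ "\<lambda>j. if j = p then 1 else 0"]) auto
next
  case (Suc k)
  show ?case
  proof (cases "\<forall>j\<in>J. D k j = 0")
    case True
    obtain c where "\<exists>j\<in>J. c j \<noteq> 0" "\<forall>l<k. (\<Sum>j\<in>J. D l j * c j) = 0"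
      using Suc by (meson Suc_lessD)
    with True show ?thesis by (auto simp: less_Suc_eq)
  next
    case False
    then obtain p where p: "p \<in> J" "D k p \<noteq> 0" by blast
    \<comment> \<open>Solve row \<open>k\<close> for the unknown \<open>c p\<close> and substitute into the other rows.\<close>
    define D' where "D' l j = D l j - D l p * inverse (D k p) * D k j" for l j
    have "k < card (J - {p})"
      using Suc.prems p by simp
    then obtain c' where c': "\<exists>j\<in>J - {p}. c' j \<noteq> 0" "\<forall>l<k. (\<Sum>j\<in>J - {p}. D' l j * c' j) = 0"
      using Suc.hyps[of "J - {p}" D'] Suc.prems by auto
    define s where "s = (\<Sum>j\<in>J - {p}. D k j * c' j)"
    define c where "c = c'(p := - (inverse (D k p) * s))"
    have rows: "(\<Sum>j\<in>J. D l j * c j) = (\<Sum>j\<in>J - {p}. D' l j * c' j)" for l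
    proof -
      have "(\<Sum>j\<in>J. D l j * c j) = D l p * c p + (\<Sum>j\<in>J - {p}. D l j * c' j)"
        using Suc.prems p by (simp add: sum.remove c_def)
      also have "D l p * c p = - (\<Sum>j\<in>J - {p}. D l p * inverse (D k p) * D k j * c' j)"
        by (simp add: c_def s_def sum_distrib_left mult.assoc)
      finally show ?thesis
        by (simp add: D'_def left_diff_distrib sum_subtractf)
    qed
    have "D' k = (\<lambda>j. 0)"
      using p(2) by (simp add: D'_def fun_eq_iff)
    then have "\<forall>l<Suc k. (\<Sum>j\<in>J. D l j * c j) = 0"
      using rows c'(2) by (auto simp: less_Suc_eq)
    moreover have "\<exists>j\<in>J. c j \<noteq> 0" using c'(1) by (auto simp: c_def)
    ultimately show ?thesis by blast
  qed
qed

lemma sum_lessThan_Suc_transpose: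
  fixes g :: "nat \<Rightarrow> 'a::comm_monoid_add"
  assumes "j < Suc m"
  shows "(\<Sum>l<Suc m. g l) = g j + (\<Sum>l<m. g (Transposition.transpose j m l))"
proof -
  have "(\<Sum>l<Suc m. g l) = (\<Sum>l<Suc m. g (Transposition.transpose j m l))"
    using sum.permute[OF permutes_swap_id[of j "{..<Suc m}" m], of g] assms by (simp add: comp_def)
  then show ?thesis by (simp add: add.commute)
qed

text \<open>The transposition moves the redundant \<open>b\<^sub>j\<close> to the last slot, which is then dropped.\<close>

lemma spans_drop:
  assumes sp: "spans M (Suc m) b" and dep: "germ_eq (rcomb (Suc m) b c) (\<lambda>x i. 0)"
    and j: "j < Suc m" "c j \<noteq> 0"
  shows "spans M m (\<lambda>l. b (Transposition.transpose j m l))"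
  unfolding spans_def
proof safe
  fix l assume "l < m"
  then have "Transposition.transpose j m l < Suc m"
    using j(1) by (simp add: Transposition.transpose_def)
  then show "b (Transposition.transpose j m l) \<in> M"
    using sp by (simp add: spans_def)
next
  fix f assume "f \<in> M"
  then obtain d where d: "germ_eq f (rcomb (Suc m) b d)"
    using sp by (auto simp: spans_def)
  define e where "e l = d l - c l * (inverse (c j) * d j)" for l
  have "e j = 0"
    using j(2) by (simp add: e_def mult.assoc[symmetric])
  have "germ_eq f (rcomb m (\<lambda>l. b (Transposition.transpose j m l)) (\<lambda>l. e (Transposition.transpose j m l)))"
    using d dep unfolding germ_eq_def
  proof eventually_elim
    case (elim x)
    show ?case
    proof
      fix i
      have "f x i = rcomb (Suc m) b d x i - rcomb (Suc m) b c x i * (inverse (c j) * d j)"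
        using elim by simp
      also have "\<dots> = (\<Sum>l<Suc m. b l x i * e l)"
        unfolding rcomb_def e_def
        by (simp only: sum_distrib_right right_diff_distrib sum_subtractf mult.assoc)
      also have "\<dots> = (\<Sum>l<m. b (Transposition.transpose j m l) x i * e (Transposition.transpose j m l))"
        using sum_lessThan_Suc_transpose[OF j(1), of "\<lambda>l. b l x i * e l"] \<open>e j = 0\<close> by simp
      finally show "f x i = rcomb m (\<lambda>l. b (Transposition.transpose j m l)) (\<lambda>l. e (Transposition.transpose j m l)) x i"
        by (simp add: rcomb_def)
    qed
  qed
  then show "\<exists>c. germ_eq f (rcomb m (\<lambda>l. b (Transposition.transpose j m l)) c)" by blast
qed

lemma spans_imp_basis:
  assumes "spans M k b"
  shows "\<exists>k'\<le>k. \<exists>b'. is_basis M k' b'"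
  using assms
proof (induct k arbitrary: b)
  case 0
  then have "is_basis M 0 b" by (simp add: is_basis_def)
  then show ?case by blast
next
  case (Suc m)
  show ?case
  proof (cases "is_basis M (Suc m) b")
    case False
    then obtain c j where dep: "germ_eq (rcomb (Suc m) b c) (\<lambda>x i. 0)" "j < Suc m" "c j \<noteq> 0"
      using Suc.prems by (auto simp: is_basis_def)
    from Suc.hyps[OF spans_drop[OF Suc.prems dep]] show ?thesis by (auto intro: le_SucI)
  qed blast
qed

lemma independent_le_spanning:
  assumes sp: "spans M k b" and g: "\<forall>j<N. g j \<in> M"
    and ind: "\<forall>c. germ_eq (rcomb N g c) (\<lambda>x i. 0) \<longrightarrow> (\<forall>j<N. c j = 0)"
  shows "N \<le> k"
proof (rule ccontr)
  assume "\<not> N \<le> k"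
  then have "k < card {..<N}" by simp
  have "\<forall>j<N. \<exists>d. germ_eq (g j) (rcomb k b d)"
    using sp g by (simp add: spans_def)
  then obtain D where D: "\<forall>j<N. germ_eq (g j) (rcomb k b (D j))"
    by metis
  obtain c where c: "\<exists>j\<in>{..<N}. c j \<noteq> 0" "\<forall>l<k. (\<Sum>j<N. D j l * c j) = 0"
    using homogeneous_system_nontrivial_solution[OF _ \<open>k < card {..<N}\<close>, of "\<lambda>l j. D j l"] by auto
  have "eventually (\<lambda>x. \<forall>j\<in>{..<N}. g j x = rcomb k b (D j) x) (nhds 0)"
    using D unfolding germ_eq_def by (intro eventually_ball_finite) auto
  then have "germ_eq (rcomb N g c) (\<lambda>x i. 0)"
    unfolding germ_eq_def
  proof eventually_elim
    case (elim x)
    show ?case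
    proof
      fix i
      have "rcomb N g c x i = (\<Sum>j<N. (\<Sum>l<k. b l x i * D j l) * c j)"
        using elim by (simp add: rcomb_def)
      also have "\<dots> = (\<Sum>l<k. b l x i * (\<Sum>j<N. D j l * c j))"
        by (simp add: sum_distrib_right sum_distrib_left mult.assoc sum.swap[of _ "{..<N}"])
      also have "\<dots> = 0" using c(2) by simp
      finally show "rcomb N g c x i = 0" .
    qed
  qed
  then show False using ind c(1) by auto
qed

lemma qdim_le:
  assumes "spans M k b"
  shows "qdim M \<le> k"
proof -
  obtain k' b' where "k' \<le> k" "is_basis M k' b'"
    using spans_imp_basis[OF assms] by blast
  then have "qdim M \<le> k'"
    unfolding qdim_def by (blast intro: Least_le)
  with \<open>k' \<le> k\<close> show ?thesis by simp
qed

lemma is_basis_qdim: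
  assumes "spans M k b"
  shows "\<exists>b'. is_basis M (qdim M) b'"
  unfolding qdim_def by (rule LeastI_ex) (use spans_imp_basis[OF assms] in blast)

lemma qdim_eq_iff_is_basis:
  assumes sp: "spans M N b"
  shows "qdim M = N \<longleftrightarrow> is_basis M N b"
proof
  assume "is_basis M N b"
  moreover obtain b' where "is_basis M (qdim M) b'"
    using is_basis_qdim[OF sp] by blast
  ultimately have "N \<le> qdim M"
    by (intro independent_le_spanning[of M "qdim M" b' N b]) (auto simp: is_basis_def spans_def)
  with qdim_le[OF sp] show "qdim M = N" by simp
next
  assume dim: "qdim M = N"
  show "is_basis M N b"
  proof (rule ccontr)
    assume "\<not> is_basis M N b"
    then obtain c j where dep: "germ_eq (rcomb N b c) (\<lambda>x i. 0)" "j < N" "c j \<noteq> 0"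
      using sp by (auto simp: is_basis_def)
    then obtain m where "N = Suc m" by (cases N) auto
    with sp dep have "spans M m (\<lambda>l. b (Transposition.transpose j m l))"
      by (intro spans_drop[of M m b c]) simp_all
    then have "qdim M \<le> m"
      by (rule qdim_le)
    with dim \<open>N = Suc m\<close> show False by simp
  qed
qed

section \<open>Realizations\<close>

lemma mv_qvecs: "mv m k A v \<in> qvecs m"
  by (simp add: mv_def qvecs_def)

lemma mv_sum: "mv m k A (\<lambda>l. \<Sum>j\<in>S. v j l * q j) = (\<lambda>i. \<Sum>j\<in>S. mv m k A (v j) i * q j)"
proof
  fix i
  have "(\<Sum>l<k. A i l * (\<Sum>j\<in>S. v j l * q j)) = (\<Sum>j\<in>S. (\<Sum>l<k. A i l * v j l) * q j)"
    by (simp add: sum_distrib_left sum_distrib_right mult.assoc sum.swap[of _ "{..<k}"])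
  then show "mv m k A (\<lambda>l. \<Sum>j\<in>S. v j l * q j) i = (\<Sum>j\<in>S. mv m k A (v j) i * q j)"
    by (simp add: mv_def)
qed

lemma funpow_mv_sum:
  "(mv N N A ^^ n) (\<lambda>l. \<Sum>j\<in>S. v j l * q j) = (\<lambda>i. \<Sum>j\<in>S. (mv N N A ^^ n) (v j) i * q j)"
  by (induct n) (simp_all add: mv_sum)

lemma CApow_sum:
  "CApow r N C A n (\<lambda>l. \<Sum>j\<in>S. v j l * q j) = (\<lambda>i. \<Sum>j\<in>S. CApow r N C A n (v j) i * q j)"
  by (simp add: CApow_def funpow_mv_sum mv_sum)

lemma CApow_Suc: "CApow r N C A (Suc n) \<xi> = CApow r N C A n (mv N N A \<xi>)"
  unfolding CApow_def funpow_Suc_right by simp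

definition unit_qvec :: "nat \<Rightarrow> nat \<Rightarrow> quat" where
  "unit_qvec j = (\<lambda>l. if l = j then 1 else 0)"

lemma unit_qvec_qvecs: "j < N \<Longrightarrow> unit_qvec j \<in> qvecs N"
  by (simp add: unit_qvec_def qvecs_def)

lemma qvecs_unit_expansion:
  assumes "\<xi> \<in> qvecs N"
  shows "\<xi> = (\<lambda>l. \<Sum>j<N. unit_qvec j l * \<xi> j)"
proof
  fix l
  have "unit_qvec j l * \<xi> j = (if j = l then \<xi> l else 0)" for j
    by (simp add: unit_qvec_def)
  then show "\<xi> l = (\<Sum>j<N. unit_qvec j l * \<xi> j)"
    using assms by (simp add: qvecs_def)
qed

lemma CApow_unit_expansion:
  "\<xi> \<in> qvecs N \<Longrightarrow> CApow r N C A n \<xi> = (\<lambda>i. \<Sum>j<N. CApow r N C A n (unit_qvec j) i * \<xi> j)"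
  by (subst qvecs_unit_expansion) (simp_all add: CApow_sum)

definition qvec_trunc :: "nat \<Rightarrow> (nat \<Rightarrow> quat) \<Rightarrow> nat \<Rightarrow> quat" where
  "qvec_trunc N c = (\<lambda>j. if j < N then c j else 0)"

lemma qvec_trunc_qvecs: "qvec_trunc N c \<in> qvecs N"
  by (simp add: qvec_trunc_def qvecs_def)

lemma qvec_trunc_id: "\<xi> \<in> qvecs N \<Longrightarrow> qvec_trunc N \<xi> = \<xi>"
  by (auto simp: qvec_trunc_def qvecs_def)

lemma rcomb_qvec_trunc: "rcomb N b (qvec_trunc N c) = rcomb N b c"
  by (simp add: rcomb_def qvec_trunc_def)

lemma CApow_shift_matrix:
  fixes \<alpha> :: "nat \<Rightarrow> nat \<Rightarrow> nat \<Rightarrow> quat"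
  assumes shift: "\<And>j n i. j < k \<Longrightarrow> \<alpha> j (Suc n) i = (\<Sum>l<k. \<alpha> l n i * A l j)"
    and vanish: "\<And>j n i. j < k \<Longrightarrow> r \<le> i \<Longrightarrow> \<alpha> j n i = 0"
  shows "CApow r k (\<lambda>i j. \<alpha> j 0 i) A n \<xi> = (\<lambda>i. \<Sum>j<k. \<alpha> j n i * \<xi> j)"
proof (induct n arbitrary: \<xi>)
  case 0
  show ?case
  proof
    fix i
    show "CApow r k (\<lambda>i j. \<alpha> j 0 i) A 0 \<xi> i = (\<Sum>j<k. \<alpha> j 0 i * \<xi> j)"
      using vanish by (cases "i < r") (simp_all add: CApow_def mv_def)
  qed
next
  case (Suc n)
  show ?case
  proof
    fix i
    have "CApow r k (\<lambda>i j. \<alpha> j 0 i) A (Suc n) \<xi> i = (\<Sum>l<k. \<alpha> l n i * (\<Sum>j<k. A l j * \<xi> j))"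
      by (simp add: CApow_Suc Suc mv_def)
    also have "\<dots> = (\<Sum>l<k. \<Sum>j<k. \<alpha> l n i * A l j * \<xi> j)"
      by (simp only: sum_distrib_left mult.assoc)
    also have "\<dots> = (\<Sum>j<k. (\<Sum>l<k. \<alpha> l n i * A l j) * \<xi> j)"
      by (subst sum.swap) (simp only: sum_distrib_right)
    also have "\<dots> = (\<Sum>j<k. \<alpha> j (Suc n) i * \<xi> j)"
      by (simp add: shift)
    finally show "CApow r k (\<lambda>i j. \<alpha> j 0 i) A (Suc n) \<xi> i = (\<Sum>j<k. \<alpha> j (Suc n) i * \<xi> j)" .
  qed
qed

lemma R0_invariant_shift_matrix:
  assumes sp: "spans M k b" and \<alpha>: "\<forall>j<k. has_expansion r (b j) (\<alpha> j)"
    and inv: "R0_invariant r M"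
  shows "\<exists>A. \<forall>j<k. \<forall>n i. \<alpha> j (Suc n) i = (\<Sum>l<k. \<alpha> l n i * A l j)"
proof -
  have \<alpha>_series: "\<forall>j<k. series_near0 (b j) (\<alpha> j)"
    using \<alpha> by (simp add: has_expansion_def)
  have "\<forall>j<k. \<exists>d. series_near0 (rcomb k b d) (\<lambda>n. \<alpha> j (Suc n))"
  proof (intro allI impI)
    fix j assume "j < k"
    then obtain g where g: "g \<in> M" "has_expansion r g (\<lambda>n. \<alpha> j (Suc n))"
      using inv sp \<alpha> unfolding R0_invariant_def spans_def by blast
    then obtain d where "germ_eq g (rcomb k b d)"
      using sp by (auto simp: spans_def)
    with g(2) show "\<exists>d. series_near0 (rcomb k b d) (\<lambda>n. \<alpha> j (Suc n))"
      by (auto simp: has_expansion_def intro: series_near0_germ_eq)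
  qed
  then obtain Acol where Acol: "\<forall>j<k. series_near0 (rcomb k b (Acol j)) (\<lambda>n. \<alpha> j (Suc n))"
    by metis
  have "\<alpha> j (Suc n) i = (\<Sum>l<k. \<alpha> l n i * Acol j l)" if "j < k" for j n i
    using series_near0_unique[OF Acol[rule_format, OF that] series_near0_rcomb[OF \<alpha>_series]]
    by (simp add: fun_eq_iff)
  then show ?thesis
    by (intro exI[of _ "\<lambda>l j. Acol j l"]) simp
qed

lemma realizes_if_R0_invariant:
  assumes lin: "right_lin_space M" and fd: "fin_dim M"
    and ex: "\<forall>f\<in>M. \<exists>a. has_expansion r f a" and inv: "R0_invariant r M"
  shows "\<exists>N C A. realizes r M N C A"
proof -
  obtain k b where sp: "spans M k b"
    using fd by (auto simp: fin_dim_def)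
  have bM: "\<forall>j<k. b j \<in> M"
    using sp by (simp add: spans_def)
  have "\<forall>j<k. \<exists>a. has_expansion r (b j) a"
    using bM ex by blast
  then obtain \<alpha> where \<alpha>: "\<forall>j<k. has_expansion r (b j) (\<alpha> j)"
    by metis
  obtain A where shift: "\<forall>j<k. \<forall>n i. \<alpha> j (Suc n) i = (\<Sum>l<k. \<alpha> l n i * A l j)"
    using R0_invariant_shift_matrix[OF sp \<alpha> inv] by blast
  have vanish: "\<alpha> j n i = 0" if "j < k" "r \<le> i" for j n i
    using \<alpha> that by (simp add: has_expansion_def qvecs_def)
  define C where "C = (\<lambda>i j. \<alpha> j 0 i)"
  have series: "series_near0 (rcomb k b \<xi>) (\<lambda>n. CApow r k C A n \<xi>)" for \<xi>
    using series_near0_rcomb[of k b \<alpha> \<xi>] \<alpha> shift vanish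
    by (simp add: has_expansion_def C_def CApow_shift_matrix)
  have "realizes r M k C A"
    unfolding realizes_def
  proof safe
    fix f assume "f \<in> M"
    then obtain d where "germ_eq f (rcomb k b d)"
      using sp by (auto simp: spans_def)
    then have "series_near0 f (\<lambda>n. CApow r k C A n (qvec_trunc k d))"
      using series[of "qvec_trunc k d"]
      by (auto simp: rcomb_qvec_trunc intro: series_near0_germ_eq germ_eq_sym)
    then show "\<exists>\<xi>\<in>qvecs k. series_near0 f (\<lambda>n. CApow r k C A n \<xi>)"
      using qvec_trunc_qvecs by blast
  next
    fix \<xi> :: "nat \<Rightarrow> quat"
    show "\<exists>f\<in>M. series_near0 f (\<lambda>n. CApow r k C A n \<xi>)"
      using rcomb_mem[OF lin bM] series by blast
  qed
  then show ?thesis by blast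
qed

lemma R0_invariant_if_realizes:
  assumes "realizes r M N C A"
  shows "R0_invariant r M"
  unfolding R0_invariant_def
proof safe
  fix f a assume "f \<in> M" and a: "has_expansion r f a"
  then obtain \<xi> where "\<xi> \<in> qvecs N" "series_near0 f (\<lambda>n. CApow r N C A n \<xi>)"
    using assms by (auto simp: realizes_def)
  then have a_eq: "a = (\<lambda>n. CApow r N C A n \<xi>)"
    using a by (intro series_near0_unique[of f]) (simp_all add: has_expansion_def)
  obtain g where g: "g \<in> M" "series_near0 g (\<lambda>n. CApow r N C A n (mv N N A \<xi>))"
    using assms mv_qvecs[of N N A \<xi>] unfolding realizes_def by blast
  have "(\<lambda>n. CApow r N C A n (mv N N A \<xi>)) = (\<lambda>n. a (Suc n))"
    by (simp add: a_eq CApow_Suc)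
  with g(2) have "series_near0 g (\<lambda>n. a (Suc n))"
    by simp
  with g(1) a show "\<exists>g\<in>M. has_expansion r g (\<lambda>n. a (Suc n))"
    by (auto simp: has_expansion_def)
qed

lemma realization_spanning_family:
  assumes re: "realizes r M N C A"
  obtains b where "spans M N b"
    and "\<And>\<xi>. \<xi> \<in> qvecs N \<Longrightarrow> series_near0 (rcomb N b \<xi>) (\<lambda>n. CApow r N C A n \<xi>)"
proof -
  have "\<forall>j<N. \<exists>f\<in>M. series_near0 f (\<lambda>n. CApow r N C A n (unit_qvec j))"
    using re unit_qvec_qvecs by (auto simp: realizes_def)
  then obtain b where "\<forall>j<N. b j \<in> M \<and> series_near0 (b j) (\<lambda>n. CApow r N C A n (unit_qvec j))"
    by metis
  then have bM: "\<forall>j<N. b j \<in> M"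
    and b_series: "\<forall>j<N. series_near0 (b j) (\<lambda>n. CApow r N C A n (unit_qvec j))"
    by simp_all
  have series: "series_near0 (rcomb N b \<xi>) (\<lambda>n. CApow r N C A n \<xi>)" if "\<xi> \<in> qvecs N" for \<xi>
    using series_near0_rcomb[OF b_series, of \<xi>] CApow_unit_expansion[OF that] by simp
  have "spans M N b"
    unfolding spans_def
  proof safe
    fix j assume "j < N"
    then show "b j \<in> M" using bM by blast
  next
    fix f assume "f \<in> M"
    then obtain \<xi> where "\<xi> \<in> qvecs N" "series_near0 f (\<lambda>n. CApow r N C A n \<xi>)"
      using re by (auto simp: realizes_def)
    then have "germ_eq f (rcomb N b \<xi>)"
      using series germ_eq_if_series_near0 by blast
    then show "\<exists>c. germ_eq f (rcomb N b c)" by blast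
  qed
  with series show ?thesis using that by blast
qed

lemma germ_eq_zero_iff_CApow_zero:
  assumes series: "\<And>\<xi>. \<xi> \<in> qvecs N \<Longrightarrow> series_near0 (rcomb N b \<xi>) (\<lambda>n. CApow r N C A n \<xi>)"
  shows "germ_eq (rcomb N b c) (\<lambda>x i. 0) \<longleftrightarrow> (\<forall>n. CApow r N C A n (qvec_trunc N c) = (\<lambda>i. 0))"
proof
  assume "germ_eq (rcomb N b c) (\<lambda>x i. 0)"
  then have "series_near0 (\<lambda>x i. 0) (\<lambda>n. CApow r N C A n (qvec_trunc N c))"
    using series[OF qvec_trunc_qvecs] by (auto simp: rcomb_qvec_trunc intro: series_near0_germ_eq)
  then have "(\<lambda>n. CApow r N C A n (qvec_trunc N c)) = (\<lambda>n i. 0)"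
    using series_near0_zero by (rule series_near0_unique)
  then show "\<forall>n. CApow r N C A n (qvec_trunc N c) = (\<lambda>i. 0)"
    by metis
next
  assume "\<forall>n. CApow r N C A n (qvec_trunc N c) = (\<lambda>i. 0)"
  then have "series_near0 (rcomb N b c) (\<lambda>n i. 0)"
    using series[OF qvec_trunc_qvecs, of c] by (simp add: rcomb_qvec_trunc)
  then show "germ_eq (rcomb N b c) (\<lambda>x i. 0)"
    using series_near0_zero by (rule germ_eq_if_series_near0)
qed

lemma is_basis_iff_observable:
  assumes sp: "spans M N b"
    and series: "\<And>\<xi>. \<xi> \<in> qvecs N \<Longrightarrow> series_near0 (rcomb N b \<xi>) (\<lambda>n. CApow r N C A n \<xi>)"
  shows "is_basis M N b \<longleftrightarrow> observable r N C A"
proof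
  assume basis: "is_basis M N b"
  show "observable r N C A"
    unfolding observable_def
  proof safe
    fix \<xi> assume \<xi>: "\<xi> \<in> qvecs N" "\<forall>n. CApow r N C A n \<xi> = (\<lambda>i. 0)"
    then have "\<forall>j<N. \<xi> j = 0"
      using basis germ_eq_zero_iff_CApow_zero[OF series, of \<xi>]
      by (simp add: is_basis_def qvec_trunc_id)
    show "\<xi> = (\<lambda>i. 0)"
    proof
      fix i
      show "\<xi> i = 0"
        using \<xi>(1) \<open>\<forall>j<N. \<xi> j = 0\<close> by (cases "i < N") (simp_all add: qvecs_def)
    qed
  qed
next
  assume obs: "observable r N C A"
  show "is_basis M N b"
    unfolding is_basis_def
  proof safe
    fix c j assume "germ_eq (rcomb N b c) (\<lambda>x i. 0)" "j < N"
    then have "qvec_trunc N c = (\<lambda>i. 0)"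
      using obs germ_eq_zero_iff_CApow_zero[OF series, of c] qvec_trunc_qvecs
      unfolding observable_def by blast
    with \<open>j < N\<close> show "c j = 0"
      by (metis qvec_trunc_def)
  qed (rule sp)
qed

lemma realizes_qdim:
  assumes "realizes r M N C A"
  shows "qdim M \<le> N \<and> (qdim M = N \<longleftrightarrow> observable r N C A)"
proof -
  obtain b where sp: "spans M N b"
    and "\<And>\<xi>. \<xi> \<in> qvecs N \<Longrightarrow> series_near0 (rcomb N b \<xi>) (\<lambda>n. CApow r N C A n \<xi>)"
    using realization_spanning_family[OF assms] by blast
  then have "is_basis M N b \<longleftrightarrow> observable r N C A"
    by (rule is_basis_iff_observable)
  with qdim_le[OF sp] qdim_eq_iff_is_basis[OF sp] show ?thesis by simp
qed

theorem mainTheorem9: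
  fixes r :: nat and M :: "(quat \<Rightarrow> nat \<Rightarrow> quat) set"
  assumes "right_lin_space M"
    and "fin_dim M"
    and "\<forall>f\<in>M. \<exists>a. has_expansion r f a"
  shows "(R0_invariant r M \<longleftrightarrow> (\<exists>N C A. realizes r M N C A)) \<and>
         (\<forall>N C A. realizes r M N C A \<longrightarrow>
            qdim M \<le> N \<and> (qdim M = N \<longleftrightarrow> observable r N C A))"
  using realizes_if_R0_invariant[OF assms] R0_invariant_if_realizes realizes_qdim by blast

end
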